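(* Let $\phi:M_D(\mathbb{C})\to M_D(\mathbb{C})$ be a primitive unital Schwarz map and $n\in\mathbb{N}$. Then $\mathcal{M}_{\phi^n}=\mathcal{M}_{\phi^{n+1}}$ if and only if $n\ge\kappa(\phi)$.
   Context: $M_D(\mathbb{C})$ is the algebra of complex $D\times D$ matrices. A linear map $\phi$ is a unital Schwarz map if $\phi(I)=I$ and $\phi(a^*a)\ge\phi(a)^*\phi(a)$ for all $a$; it is primitive if some power $\phi^n$ maps every nonzero positive semidefinite matrix to a positive definite matrix. For a unital Schwarz map $\psi$, the multiplicative domain is $\mathcal{M}_\psi=\{a : \psi(a^*a)=\psi(a)^*\psi(a) \text{ and } \psi(aa^* )=\psi(a)\psi(a)^*\}$; for primitive unital Schwarz $\phi$ one has $\mathcal{M}_{\phi^{n+1}}\subseteq\mathcal{M}_{\phi^n}$ for all $n$, and $\kappa(\phi)$ is the minimal $k\in\mathbb{N}$ with $\bigcap_{n}\mathcal{M}_{\phi^n}=\mathcal{M}_{\phi^k}$. *)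

theory Defs
  imports "HOL-Analysis.Analysis" "HOL-Library.Complex_Order"
begin

text \<open>Complex D x D matrices are represented as complex^'n^'n with D = CARD('n).\<close>

definition cscale :: "complex \<Rightarrow> complex^'n^'m \<Rightarrow> complex^'n^'m" where
  "cscale c A = (\<chi> i j. c * A$i$j)"

definition cadj :: "complex^'n^'m \<Rightarrow> complex^'m^'n" where
  "cadj A = (\<chi> i j. cnj (A$j$i))"

definition cquad :: "complex^'n^'n \<Rightarrow> complex^'n \<Rightarrow> complex" where
  "cquad A v = (\<Sum>i\<in>UNIV. cnj (v$i) * (A *v v)$i)"

definition psd :: "complex^'n^'n \<Rightarrow> bool" where
  "psd A \<longleftrightarrow> (\<forall>v. 0 \<le> cquad A v)"

definition pos_def :: "complex^'n^'n \<Rightarrow> bool" where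
  "pos_def A \<longleftrightarrow> (\<forall>v. v \<noteq> 0 \<longrightarrow> 0 < cquad A v)"

definition loewner_le :: "complex^'n^'n \<Rightarrow> complex^'n^'n \<Rightarrow> bool" where
  "loewner_le A B \<longleftrightarrow> psd (B - A)"

definition clinear_map :: "(complex^'n^'n \<Rightarrow> complex^'n^'n) \<Rightarrow> bool" where
  "clinear_map f \<longleftrightarrow> (\<forall>A B. f (A + B) = f A + f B) \<and> (\<forall>c A. f (cscale c A) = cscale c (f A))"

definition unital_schwarz :: "(complex^'n^'n \<Rightarrow> complex^'n^'n) \<Rightarrow> bool" where
  "unital_schwarz f \<longleftrightarrow> clinear_map f \<and> f (mat 1) = mat 1 \<and>
     (\<forall>a. loewner_le (cadj (f a) ** f a) (f (cadj a ** a)))"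

definition primitive :: "(complex^'n^'n \<Rightarrow> complex^'n^'n) \<Rightarrow> bool" where
  "primitive f \<longleftrightarrow> (\<exists>n. \<forall>A. psd A \<and> A \<noteq> 0 \<longrightarrow> pos_def ((f ^^ n) A))"

definition mult_domain :: "(complex^'n^'n \<Rightarrow> complex^'n^'n) \<Rightarrow> (complex^'n^'n) set" where
  "mult_domain psi = {a. psi (cadj a ** a) = cadj (psi a) ** psi a \<and>
                         psi (a ** cadj a) = psi a ** cadj (psi a)}"

definition kappa :: "(complex^'n^'n \<Rightarrow> complex^'n^'n) \<Rightarrow> nat" where
  "kappa f = (LEAST k. (\<Inter>n. mult_domain (f ^^ n)) = mult_domain (f ^^ k))"

end

theory Submission
  imports Defs
begin

text \<open>A unital Schwarz map is positive, since every psd matrix is a sum of rank-one matrices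
  cadj R ** R, and it preserves adjoints. Equality in the Schwarz inequality at a forces
  f (cadj b ** a) = cadj (f b) ** f a for all b, so multiplicative domains are subspaces. Primitivity
  makes every power of phi faithful, and for faithful f the multiplicative domain of f \<circ> g consists
  of the a in that of g with g a in that of f. Applied to phi ^^ Suc n = phi \<circ> phi ^^ n and to
  phi ^^ Suc n = phi ^^ n \<circ> phi this shows that the domains M n decrease and that
  M (n + 1) = {a \<in> M 1. phi a \<in> M n}; hence once M n = M (n + 1) the chain is constant from n on.
  Being subspaces of a finite-dimensional space, the M n do stabilise, and kappa phi is the first
  index where they do.\<close>

lemma cadj_cadj [simp]: "cadj (cadj A) = A"
  by (simp add: cadj_def vec_eq_iff)

lemma cadj_0 [simp]: "cadj 0 = 0"
  by (simp add: cadj_def vec_eq_iff)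

lemma cadj_add: "cadj (A + B) = cadj A + cadj B"
  by (simp add: cadj_def vec_eq_iff)

lemma cadj_cscale: "cadj (cscale c A) = cscale (cnj c) (cadj A)"
  by (simp add: cadj_def cscale_def vec_eq_iff)

lemma cadj_scaleR: "cadj (r *\<^sub>R A) = r *\<^sub>R cadj A"
  by (simp add: cadj_def vec_eq_iff; simp add: scaleR_conv_of_real)

lemma cadj_mat_1 [simp]: "cadj (mat 1 :: complex^'n^'n) = mat 1"
  by (simp add: cadj_def mat_def vec_eq_iff)

lemma cscale_0_left [simp]: "cscale 0 A = 0"
  by (simp add: cscale_def vec_eq_iff)

lemma cscale_0_right [simp]: "cscale c 0 = 0"
  by (simp add: cscale_def vec_eq_iff)

lemma cscale_add: "cscale c (A + B) = cscale c A + cscale c B"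
  by (simp add: cscale_def vec_eq_iff algebra_simps)

lemma cscale_diff: "cscale c (A - B) = cscale c A - cscale c B"
  by (simp add: cscale_def vec_eq_iff algebra_simps)

lemma cscale_cscale: "cscale c (cscale d A) = cscale (c * d) A"
  by (simp add: cscale_def vec_eq_iff)

lemma cscale_of_real: "cscale (of_real r) A = r *\<^sub>R A"
  by (simp add: cscale_def vec_eq_iff; simp add: scaleR_conv_of_real)

lemma cscale_minus_1: "cscale (-1) A = - A"
  by (simp add: cscale_def vec_eq_iff)

lemma cscale_matrix_mult: "cscale c A ** B = cscale c (A ** B)"
  by (simp add: cscale_def matrix_matrix_mult_def vec_eq_iff sum_distrib_left mult.assoc)

lemma matrix_mult_cscale: "A ** cscale c B = cscale c (A ** B)"
  by (simp add: cscale_def matrix_matrix_mult_def vec_eq_iff sum_distrib_left mult_ac)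

lemma matrix_add_rdistrib: "(A + B) ** C = A ** C + B ** (C :: 'a::semiring_1^'p^'n)"
  by (simp add: matrix_matrix_mult_def vec_eq_iff algebra_simps sum.distrib)

lemma cadj_mult_add_cscale_self:
  "cadj (a + cscale c b) ** (a + cscale c b) =
    cadj a ** a + cscale c (cadj a ** b) + cscale (cnj c) (cadj b ** a) + cscale (c * cnj c) (cadj b ** b)"
  by (simp add: cadj_add cadj_cscale matrix_add_ldistrib matrix_add_rdistrib
      cscale_matrix_mult matrix_mult_cscale cscale_cscale cscale_add add_ac)

lemma clinear_map_add: "clinear_map f \<Longrightarrow> f (A + B) = f A + f B"
  by (simp add: clinear_map_def)

lemma clinear_map_cscale: "clinear_map f \<Longrightarrow> f (cscale c A) = cscale c (f A)"
  by (simp add: clinear_map_def)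

lemma clinear_map_0: "clinear_map f \<Longrightarrow> f 0 = 0"
  using clinear_map_cscale[of f 0 0] by simp

lemma clinear_map_diff: "clinear_map f \<Longrightarrow> f (A - B) = f A - f B"
  using clinear_map_add[of f A "- B"] clinear_map_cscale[of f "-1" B] by (simp add: cscale_minus_1)

lemma clinear_map_comp: "clinear_map f \<Longrightarrow> clinear_map g \<Longrightarrow> clinear_map (f \<circ> g)"
  by (simp add: clinear_map_def)

lemma clinear_map_id: "clinear_map id"
  by (simp add: clinear_map_def)

section \<open>Sesquilinear forms and positive semidefinite matrices\<close>

lemma quadratic_nonneg_imp_cnj:
  fixes A B z w :: complex
  assumes nonneg: "\<And>t. 0 \<le> A + t*z + cnj t*w + t*cnj t*B" and "0 \<le> A" "0 \<le> B"
  shows "z = cnj w"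
proof -
  have "0 \<le> A + 1*z + cnj 1*w + 1*cnj 1*B" by (rule nonneg)
  then have "Im z + Im w = 0" using assms(2,3) by (auto simp: less_eq_complex_def)
  moreover have "0 \<le> A + \<i>*z + cnj \<i>*w + \<i>*cnj \<i>*B" by (rule nonneg)
  then have "Re z - Re w = 0" using assms(2,3) by (auto simp: less_eq_complex_def)
  ultimately show ?thesis by (simp add: complex_eq_iff)
qed

lemma quadratic_nonneg_imp_zero:
  fixes A B z w :: complex
  assumes nonneg: "\<And>t. 0 \<le> A + t*z + cnj t*w + t*cnj t*B" and "A = 0" "0 \<le> B"
  shows "w = 0"
proof -
  have z: "z = cnj w" using quadratic_nonneg_imp_cnj[OF nonneg] assms by simp
  obtain b where b: "B = of_real b" "b \<ge> 0" using assms(3)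
    by (metis complex_is_Real_iff less_eq_complex_def of_real_Re zero_complex.sel(1) zero_complex.sel(2))
  define r where "r = 1/(b+1)"
  have r: "r > 0" "r * b - 2 < 0" using b by (auto simp: r_def field_simps)
  have "0 \<le> A + (-of_real r*w)*z + cnj (-of_real r*w)*w + (-of_real r*w)*cnj (-of_real r*w)*B"
    by (rule nonneg)
  then have "0 \<le> Re (A + (-of_real r*w)*z + cnj (-of_real r*w)*w + (-of_real r*w)*cnj (-of_real r*w)*B)"
    by (simp add: less_eq_complex_def)
  then have "0 \<le> r*(Re w^2 + Im w^2) * (r*b - 2)"
    using assms(2) z b by (simp add: algebra_simps power2_eq_square)
  then have "r*(Re w^2 + Im w^2) \<le> 0" using r(2) by (simp add: zero_le_mult_iff)
  then have "Re w^2 + Im w^2 \<le> 0" using r(1) by (simp add: mult_le_0_iff)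
  then have "Re w^2 = 0" "Im w^2 = 0" by (smt (verit) zero_le_power2)+
  then show ?thesis by (simp add: complex_eq_iff)
qed

lemma quadratic_nonneg_cauchy_schwarz:
  fixes A B z w :: complex
  assumes nonneg: "\<And>t. 0 \<le> A + t*z + cnj t*w + t*cnj t*B" and "0 \<le> A" "0 < B"
  shows "w * cnj w / B \<le> A"
proof -
  have z: "z = cnj w" using quadratic_nonneg_imp_cnj[OF nonneg] assms by simp
  obtain b where b: "B = of_real b" "b > 0" using assms(3)
    by (metis complex_is_Real_iff less_complex_def of_real_Re zero_complex.sel(1) zero_complex.sel(2))
  have "0 \<le> A + (-w/B)*z + cnj (-w/B)*w + (-w/B)*cnj (-w/B)*B" by (rule nonneg)
  also have "\<dots> = A - w * cnj w / B" using z b by (simp add: field_simps)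
  finally show ?thesis by (simp add: less_eq_complex_def)
qed

definition cinner :: "complex^'n \<Rightarrow> complex^'n \<Rightarrow> complex" where
  "cinner x y = (\<Sum>i\<in>UNIV. cnj (x$i) * y$i)"

definition csesq :: "complex^'n^'n \<Rightarrow> complex^'n \<Rightarrow> complex^'n \<Rightarrow> complex" where
  "csesq M x y = cinner x (M *v y)"

lemma cquad_eq_csesq: "cquad M v = csesq M v v"
  by (simp add: cquad_def csesq_def cinner_def)

lemma csesq_add_cscale_self:
  "csesq M (x + c *s y) (x + c *s y) =
    csesq M x x + c * csesq M x y + cnj c * csesq M y x + c * cnj c * csesq M y y"
  by (simp add: csesq_def cinner_def matrix_vector_mult_def algebra_simps sum.distrib sum_distrib_left)

lemma cinner_cadj: "cinner x (cadj a *v y) = cinner (a *v x) y"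
proof -
  have "cinner x (cadj a *v y) = (\<Sum>i\<in>UNIV. \<Sum>k\<in>UNIV. cnj (x$i) * cnj (a$k$i) * y$k)"
    by (simp add: cinner_def cadj_def matrix_vector_mult_def sum_distrib_left mult.assoc)
  also have "\<dots> = (\<Sum>k\<in>UNIV. \<Sum>i\<in>UNIV. cnj (x$i) * cnj (a$k$i) * y$k)"
    by (rule sum.swap)
  also have "\<dots> = cinner (a *v x) y"
    by (simp add: cinner_def matrix_vector_mult_def sum_distrib_right sum_distrib_left mult_ac)
  finally show ?thesis .
qed

lemma csesq_cadj_mult: "csesq (cadj a ** b) x y = cinner (a *v x) (b *v y)"
  by (simp add: csesq_def cinner_cadj matrix_vector_mul_assoc[symmetric])

lemma cinner_self_nonneg: "0 \<le> cinner x x"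
  unfolding cinner_def by (rule sum_nonneg) (simp add: less_eq_complex_def)

lemma csesq_0 [simp]: "csesq 0 x y = 0"
  by (simp add: csesq_def cinner_def matrix_vector_mult_def)

lemma csesq_add: "csesq (M + N) x y = csesq M x y + csesq N x y"
  by (simp add: csesq_def cinner_def matrix_vector_mult_add_rdistrib algebra_simps sum.distrib)

lemma csesq_diff: "csesq (M - N) x y = csesq M x y - csesq N x y"
  by (simp add: csesq_def cinner_def matrix_vector_mult_def algebra_simps sum_subtractf)

lemma csesq_uminus: "csesq (- M) x y = - csesq M x y"
  by (simp add: csesq_def cinner_def matrix_vector_mult_def algebra_simps sum_negf)

lemma csesq_cscale: "csesq (cscale c M) x y = c * csesq M x y"
  by (simp add: csesq_def cinner_def cscale_def matrix_vector_mult_def algebra_simps sum_distrib_left)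

lemma cinner_axis: "cinner (axis i 1) v = v$i"
proof -
  have "cnj (axis i 1 $ k) * v$k = (if k = i then v$k else 0)" for k
    by (simp add: axis_def)
  then show ?thesis by (simp add: cinner_def)
qed

lemma matrix_vector_mult_axis: "(M *v axis j 1) $ i = M$i$j"
proof -
  have "M$i$k * axis j 1 $ k = (if k = j then M$i$k else 0)" for k
    by (simp add: axis_def)
  then show ?thesis by (simp add: matrix_vector_mult_def)
qed

lemma csesq_axis_left: "csesq M (axis i 1) v = (M *v v) $ i"
  by (simp add: csesq_def cinner_axis)

lemma csesq_axis: "csesq M (axis i 1) (axis j 1) = M$i$j"
  by (simp add: csesq_axis_left matrix_vector_mult_axis)

lemma cquad_axis: "cquad M (axis i 1) = M$i$i"
  by (simp add: cquad_eq_csesq csesq_axis)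

lemma psd_adj_mult: "psd (cadj a ** a)"
  by (simp add: psd_def cquad_eq_csesq csesq_cadj_mult cinner_self_nonneg)

lemma psd_csesq_quadratic_nonneg:
  assumes "psd P"
  shows "0 \<le> csesq P x x + t * csesq P x y + cnj t * csesq P y x + t * cnj t * csesq P y y"
  using assms unfolding psd_def cquad_eq_csesq by (metis csesq_add_cscale_self)

lemma psd_csesq_cnj: "psd P \<Longrightarrow> csesq P x y = cnj (csesq P y x)"
  by (rule quadratic_nonneg_imp_cnj[OF psd_csesq_quadratic_nonneg]) (auto simp: psd_def cquad_eq_csesq)

lemma psd_csesq_eq_0: "psd P \<Longrightarrow> cquad P x = 0 \<Longrightarrow> csesq P y x = 0"
  by (rule quadratic_nonneg_imp_zero[OF psd_csesq_quadratic_nonneg]) (auto simp: psd_def cquad_eq_csesq)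

lemma psd_cauchy_schwarz:
  "psd P \<Longrightarrow> 0 < cquad P x \<Longrightarrow> csesq P x y * cnj (csesq P x y) / cquad P x \<le> cquad P y"
  unfolding cquad_eq_csesq
  by (rule quadratic_nonneg_cauchy_schwarz[OF psd_csesq_quadratic_nonneg]) (auto simp: psd_def cquad_eq_csesq)

lemma psd_entry_cnj: "psd P \<Longrightarrow> P$i$j = cnj (P$j$i)"
  by (metis csesq_axis psd_csesq_cnj)

lemma psd_cadj_eq:
  assumes "psd P" shows "cadj P = P"
proof -
  have "cnj (P$j$i) = P$i$j" for i j
    using psd_entry_cnj[OF assms, of i j] by simp
  then show ?thesis by (simp add: cadj_def vec_eq_iff)
qed

lemma matrix_eq_0_if_cquad_eq_0:
  assumes "\<And>v. cquad M v = 0" shows "M = 0"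
proof -
  have "psd M" using assms by (simp add: psd_def)
  then have "M$i$j = 0" for i j
    using psd_csesq_eq_0[OF \<open>psd M\<close> assms] csesq_axis by metis
  then show ?thesis by (simp add: vec_eq_iff)
qed

lemma psd_0: "psd 0"
  by (simp add: psd_def cquad_eq_csesq)

lemma psd_add: "psd P \<Longrightarrow> psd Q \<Longrightarrow> psd (P + Q)"
  by (simp add: psd_def cquad_eq_csesq csesq_add)

lemma psd_cscale: "psd P \<Longrightarrow> 0 \<le> c \<Longrightarrow> psd (cscale c P)"
  by (simp add: psd_def cquad_eq_csesq csesq_cscale)

lemma psd_antisym: "psd P \<Longrightarrow> psd (- P) \<Longrightarrow> P = 0"
  by (rule matrix_eq_0_if_cquad_eq_0)
    (simp add: psd_def cquad_eq_csesq csesq_uminus order.antisym)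

lemma loewner_antisym: "loewner_le A B \<Longrightarrow> loewner_le B A \<Longrightarrow> A = B"
  unfolding loewner_le_def using psd_antisym[of "B - A"] by simp

lemma loewner_trans: "loewner_le A B \<Longrightarrow> loewner_le B C \<Longrightarrow> loewner_le A C"
  unfolding loewner_le_def using psd_add[of "B - A" "C - B"] by simp

section \<open>Unital Schwarz maps are positive and preserve adjoints\<close>

definition outer :: "complex^'n \<Rightarrow> complex^'n^'n" where
  "outer w = (\<chi> k l. w$k * cnj (w$l))"

lemma outer_eq_cadj_mult: "\<exists>R. outer w = cadj R ** (R :: complex^'n^'n)"
proof -
  fix i :: 'n
  define R :: "complex^'n^'n" where "R = (\<chi> a b. if a = i then cnj (w$b) else 0)"
  have "cnj (R$m$k) * R$m$l = (if m = i then w$k * cnj (w$l) else 0)" for m k l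
    by (simp add: R_def)
  then have "outer w = cadj R ** R"
    by (simp add: outer_def cadj_def matrix_matrix_mult_def vec_eq_iff)
  then show ?thesis ..
qed

lemma cquad_outer: "cquad (outer w) x = cnj (cinner w x) * cinner w x"
  by (simp add: cquad_def cinner_def outer_def matrix_vector_mult_def sum_product sum_distrib_left mult_ac)
    (rule sum.swap)

lemma psd_row_eq_0_if_diag_eq_0:
  assumes P: "psd P" and "P$i$i = 0"
  shows "P$i = 0"
proof -
  have "P$j$i = 0" for j
    using psd_csesq_eq_0[OF P, of "axis i 1" "axis j 1"] assms(2) by (simp add: cquad_axis csesq_axis)
  then have "P$i$j = 0" for j
    using psd_entry_cnj[OF P, of i j] by simp
  then show ?thesis by (simp add: vec_eq_iff)
qed

text \<open>One step of a Cholesky decomposition: subtracting the rank-one matrix built from the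
  i-th column clears the i-th row and, by Cauchy-Schwarz, leaves a psd matrix.\<close>

lemma psd_diff_outer_column:
  assumes P: "psd P" and p: "0 < P$i$i"
  defines "P' \<equiv> P - cscale (1 / P$i$i) (outer (column i P))"
  shows "psd P'" and "\<And>k. k = i \<or> P$k = 0 \<Longrightarrow> P'$k = 0"
proof -
  have column: "cinner (column i P) v = csesq P (axis i 1) v" for v
  proof -
    have "cnj (P$k$i) = P$i$k" for k
      using psd_entry_cnj[OF P, of i k] by simp
    then show ?thesis
      by (simp add: cinner_def column_def csesq_axis_left matrix_vector_mult_def)
  qed
  show "psd P'"
    unfolding psd_def
  proof
    fix v
    have "cquad P' v = cquad P v - (1 / P$i$i) * cquad (outer (column i P)) v"
      by (simp add: P'_def cquad_eq_csesq csesq_diff csesq_cscale)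
    also have "\<dots> = cquad P v - csesq P (axis i 1) v * cnj (csesq P (axis i 1) v) / cquad P (axis i 1)"
      by (simp add: cquad_outer column cquad_axis)
    finally show "0 \<le> cquad P' v"
      using psd_cauchy_schwarz[OF P, of "axis i 1" v] p by (simp add: cquad_axis)
  qed
  have row_i: "P'$i$j = 0" for j
    using p psd_entry_cnj[OF P, of j i] by (simp add: P'_def cscale_def outer_def column_def)
  show "P'$k = 0" if "k = i \<or> P$k = 0" for k
  proof (cases "k = i")
    case True
    then show ?thesis using row_i by (simp add: vec_eq_iff)
  next
    case False
    then have "P$k = 0" using that by simp
    then show ?thesis by (simp add: P'_def cscale_def outer_def column_def vec_eq_iff)
  qed
qed

lemma clinear_map_psd_if_psd_on_outer:
  fixes f :: "complex^'n^'n \<Rightarrow> complex^'n^'n"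
  assumes f: "clinear_map f" and outer: "\<And>w. psd (f (outer w))" and "psd P"
  shows "psd (f P)"
proof -
  have "psd (f P)" if "finite S" "psd P" "\<And>k. k \<notin> S \<Longrightarrow> P$k = 0" for S and P :: "complex^'n^'n"
    using that
  proof (induction S arbitrary: P rule: finite_induct)
    case empty
    then have "P = 0" by (simp add: vec_eq_iff)
    then show ?case by (simp add: clinear_map_0[OF f] psd_0)
  next
    case (insert i S)
    show ?case
    proof (cases "P$i$i = 0")
      case True
      then have "P$i = 0" by (rule psd_row_eq_0_if_diag_eq_0[OF insert.prems(1)])
      then have "P$k = 0" if "k \<notin> S" for k
        using insert.prems(2) that by (cases "k = i") auto
      then show ?thesis using insert.IH insert.prems(1) by blast
    next
      case False
      then have p: "0 < P$i$i"
        using insert.prems(1) by (metis cquad_axis order_le_less psd_def)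
      define P' where "P' \<equiv> P - cscale (1 / P$i$i) (outer (column i P))"
      have "psd P'"
        using psd_diff_outer_column(1)[OF insert.prems(1) p] by (simp add: P'_def)
      moreover have "P'$k = 0" if "k \<notin> S" for k
        using psd_diff_outer_column(2)[OF insert.prems(1) p] insert.prems(2) that
        by (auto simp: P'_def)
      ultimately have "psd (f P')" by (rule insert.IH)
      moreover have "0 \<le> 1 / P$i$i"
        using p by (simp add: less_complex_def less_eq_complex_def Re_divide Im_divide)
      then have "psd (cscale (1 / P$i$i) (f (outer (column i P))))"
        using outer by (simp add: psd_cscale)
      moreover have "f P = f P' + cscale (1 / P$i$i) (f (outer (column i P)))"
        by (simp add: P'_def clinear_map_diff[OF f] clinear_map_cscale[OF f])
      ultimately show ?thesis by (metis psd_add)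
    qed
  qed
  from this[of UNIV P] show ?thesis using \<open>psd P\<close> by simp
qed

lemma unital_schwarz_clinear_map: "unital_schwarz f \<Longrightarrow> clinear_map f"
  by (simp add: unital_schwarz_def)

lemma unital_schwarz_mat_1: "unital_schwarz f \<Longrightarrow> f (mat 1) = mat 1"
  by (simp add: unital_schwarz_def)

lemma unital_schwarz_psd_diff:
  fixes a :: "complex^'n^'n"
  shows "unital_schwarz f \<Longrightarrow> psd (f (cadj a ** a) - cadj (f a) ** f a)"
  by (simp add: unital_schwarz_def loewner_le_def)

lemma unital_schwarz_psd_cadj_mult:
  fixes a :: "complex^'n^'n"
  shows "unital_schwarz f \<Longrightarrow> psd (f (cadj a ** a))"
  using psd_add[OF unital_schwarz_psd_diff[of f a] psd_adj_mult[of "f a"]] by simp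

lemma unital_schwarz_psd:
  assumes f: "unital_schwarz f" and "psd P"
  shows "psd (f P)"
proof (rule clinear_map_psd_if_psd_on_outer[OF unital_schwarz_clinear_map[OF f] _ \<open>psd P\<close>])
  show "psd (f (outer w))" for w
    using outer_eq_cadj_mult[of w] unital_schwarz_psd_cadj_mult[OF f] by metis
qed

lemma unital_schwarz_loewner_mono:
  "unital_schwarz f \<Longrightarrow> loewner_le A B \<Longrightarrow> loewner_le (f A) (f B)"
  by (metis loewner_le_def unital_schwarz_psd clinear_map_diff unital_schwarz_clinear_map)

text \<open>The map X \<mapsto> f (cadj X) - cadj (f X) is conjugate-linear and vanishes on psd matrices
  (whose images are psd, hence hermitian); testing it on cadj (a + c I) ** (a + c I) for
  c = 1 and c = \<i> shows that it vanishes at a.\<close>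

lemma unital_schwarz_cadj:
  fixes a :: "complex^'n^'n"
  assumes f: "unital_schwarz f"
  shows "f (cadj a) = cadj (f a)"
proof -
  have lin: "clinear_map f" using f by (rule unital_schwarz_clinear_map)
  define G where "G X = f (cadj X) - cadj (f X)" for X
  have G_add: "G (X + Y) = G X + G Y" for X Y
    by (simp add: G_def cadj_add clinear_map_add[OF lin])
  have G_cscale: "G (cscale c X) = cscale (cnj c) (G X)" for c X
    by (simp add: G_def cadj_cscale clinear_map_cscale[OF lin] cscale_diff)
  have G_psd: "G P = 0" if "psd P" for P
    using psd_cadj_eq[OF that] psd_cadj_eq[OF unital_schwarz_psd[OF f that]] by (simp add: G_def)
  have G_mat_1: "G (mat 1) = 0"
    using unital_schwarz_mat_1[OF f] by (simp add: G_def)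
  have G_sum: "cscale (cnj c) (G (cadj a)) + cscale c (G a) = 0" for c
  proof -
    have "0 = G (cadj (a + cscale c (mat 1)) ** (a + cscale c (mat 1)))"
      using G_psd[OF psd_adj_mult] by simp
    also have "\<dots> = cscale (cnj c) (G (cadj a)) + cscale c (G a)"
      by (simp add: cadj_mult_add_cscale_self G_add G_cscale G_mat_1 G_psd[OF psd_adj_mult])
    finally show ?thesis by simp
  qed
  have "G a $ r $ s = 0" for r s
  proof -
    have "G (cadj a) $ r $ s + G a $ r $ s = 0"
      using G_sum[of 1] by (simp add: cscale_def vec_eq_iff)
    moreover have "- \<i> * G (cadj a) $ r $ s + \<i> * G a $ r $ s = 0"
      using G_sum[of \<i>] by (simp add: cscale_def vec_eq_iff)
    ultimately show ?thesis by (simp add: algebra_simps)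
  qed
  then show ?thesis by (simp add: G_def vec_eq_iff)
qed

lemma unital_schwarz_comp:
  assumes f: "unital_schwarz f" and g: "unital_schwarz g"
  shows "unital_schwarz (f \<circ> g)"
  unfolding unital_schwarz_def
proof (intro conjI allI)
  show "clinear_map (f \<circ> g)"
    using f g by (simp add: clinear_map_comp unital_schwarz_clinear_map)
  show "(f \<circ> g) (mat 1) = mat 1"
    using f g by (simp add: unital_schwarz_mat_1)
  fix a
  have "loewner_le (cadj (f (g a)) ** f (g a)) (f (cadj (g a) ** g a))"
    using f by (simp add: unital_schwarz_def)
  moreover have "loewner_le (f (cadj (g a) ** g a)) (f (g (cadj a ** a)))"
    using g by (simp add: unital_schwarz_def unital_schwarz_loewner_mono[OF f])
  ultimately show "loewner_le (cadj ((f \<circ> g) a) ** (f \<circ> g) a) ((f \<circ> g) (cadj a ** a))"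
    by (simp add: loewner_trans)
qed

lemma unital_schwarz_id: "unital_schwarz id"
  by (simp add: unital_schwarz_def clinear_map_id loewner_le_def psd_0)

lemma unital_schwarz_funpow: "unital_schwarz f \<Longrightarrow> unital_schwarz (f ^^ k)"
  by (induction k) (simp_all add: unital_schwarz_id unital_schwarz_comp)

section \<open>Multiplicative domains\<close>

definition left_mult_domain :: "(complex^'n^'n \<Rightarrow> complex^'n^'n) \<Rightarrow> (complex^'n^'n) set" where
  "left_mult_domain f = {a. f (cadj a ** a) = cadj (f a) ** f a}"

lemma mult_domain_iff_left_mult_domain:
  "unital_schwarz f \<Longrightarrow> a \<in> mult_domain f \<longleftrightarrow> a \<in> left_mult_domain f \<and> cadj a \<in> left_mult_domain f"
  by (simp add: mult_domain_def left_mult_domain_def unital_schwarz_cadj)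

text \<open>The Schwarz defect D x y = f (cadj x ** y) - cadj (f x) ** f y is a psd-valued
  sesquilinear form, so D a a = 0 forces D b a = 0.\<close>

lemma left_mult_domain_mult_right:
  assumes f: "unital_schwarz f" and a: "a \<in> left_mult_domain f"
  shows "f (cadj b ** a) = cadj (f b) ** f a"
proof -
  have lin: "clinear_map f" using f by (rule unital_schwarz_clinear_map)
  define D where "D x y = f (cadj x ** y) - cadj (f x) ** f y" for x y
  have D_expand: "D (a + cscale t b) (a + cscale t b) =
      D a a + cscale t (D a b) + cscale (cnj t) (D b a) + cscale (t * cnj t) (D b b)" for t
    unfolding D_def cadj_mult_add_cscale_self
    by (simp add: clinear_map_add[OF lin] clinear_map_cscale[OF lin] cadj_mult_add_cscale_self
        cscale_diff algebra_simps)
  have D_psd: "psd (D x x)" for x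
    using unital_schwarz_psd_diff[OF f] by (simp add: D_def)
  have "cquad (D b a) v = 0" for v
  proof (rule quadratic_nonneg_imp_zero)
    show "0 \<le> cquad (D a a) v + t * cquad (D a b) v + cnj t * cquad (D b a) v + t * cnj t * cquad (D b b) v"
      for t
      using D_psd[of "a + cscale t b"]
      by (simp add: psd_def D_expand cquad_eq_csesq csesq_add csesq_cscale)
    show "cquad (D a a) v = 0"
      using a by (simp add: D_def left_mult_domain_def cquad_eq_csesq)
    show "0 \<le> cquad (D b b) v"
      using D_psd by (simp add: psd_def)
  qed
  then have "D b a = 0" by (rule matrix_eq_0_if_cquad_eq_0)
  then show ?thesis by (simp add: D_def)
qed

lemma subspace_mult_domain:
  assumes f: "unital_schwarz f"
  shows "subspace (mult_domain f)"
proof -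
  have lin: "clinear_map f" using f by (rule unital_schwarz_clinear_map)
  define L where "L = {a. \<forall>b. f (cadj b ** a) = cadj (f b) ** f a}"
  have "left_mult_domain f = L"
    using left_mult_domain_mult_right[OF f] by (auto simp: L_def left_mult_domain_def)
  then have mult_domain_eq: "mult_domain f = {a. a \<in> L \<and> cadj a \<in> L}"
    using mult_domain_iff_left_mult_domain[OF f] by blast
  have "0 \<in> L"
    by (simp add: L_def clinear_map_0[OF lin])
  moreover have "x + y \<in> L" if "x \<in> L" "y \<in> L" for x y
    using that by (simp add: L_def matrix_add_ldistrib clinear_map_add[OF lin])
  moreover have "r *\<^sub>R x \<in> L" if "x \<in> L" for r x
    using that by (simp add: L_def cscale_of_real[symmetric] matrix_mult_cscale clinear_map_cscale[OF lin])
  ultimately show ?thesis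
    unfolding mult_domain_eq by (intro subspaceI) (auto simp: cadj_add cadj_scaleR)
qed

definition faithful :: "(complex^'n^'n \<Rightarrow> complex^'n^'n) \<Rightarrow> bool" where
  "faithful f \<longleftrightarrow> (\<forall>X. psd X \<and> f X = 0 \<longrightarrow> X = 0)"

text \<open>For a in the left multiplicative domain of f \<circ> g both Schwarz inequalities in
  cadj (f (g a)) ** f (g a) \<le> f (cadj (g a) ** g a) \<le> f (g (cadj a ** a)) are equalities, so f
  kills the psd Schwarz defect of g at a, which therefore vanishes by faithfulness.\<close>

lemma left_mult_domain_comp_iff:
  assumes f: "unital_schwarz f" and g: "unital_schwarz g" and "faithful f"
  shows "a \<in> left_mult_domain (f \<circ> g) \<longleftrightarrow> a \<in> left_mult_domain g \<and> g a \<in> left_mult_domain f"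
proof
  assume "a \<in> left_mult_domain g \<and> g a \<in> left_mult_domain f"
  then show "a \<in> left_mult_domain (f \<circ> g)" by (simp add: left_mult_domain_def)
next
  assume fg: "a \<in> left_mult_domain (f \<circ> g)"
  define X where "X = g (cadj a ** a) - cadj (g a) ** g a"
  have X: "psd X" unfolding X_def by (rule unital_schwarz_psd_diff[OF g])
  have le1: "loewner_le (cadj (f (g a)) ** f (g a)) (f (cadj (g a) ** g a))"
    using f by (simp add: unital_schwarz_def)
  have le2: "loewner_le (f (cadj (g a) ** g a)) (f (g (cadj a ** a)))"
    using unital_schwarz_loewner_mono[OF f] X by (simp add: X_def loewner_le_def)
  have eq: "f (cadj (g a) ** g a) = f (g (cadj a ** a))"
    using loewner_antisym[OF le2] le1 fg by (simp add: left_mult_domain_def)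
  then have "f X = 0"
    by (simp add: X_def clinear_map_diff[OF unital_schwarz_clinear_map[OF f]])
  then have "X = 0" using \<open>faithful f\<close> X by (simp add: faithful_def)
  then show "a \<in> left_mult_domain g \<and> g a \<in> left_mult_domain f"
    using eq fg by (simp add: X_def left_mult_domain_def)
qed

lemma mult_domain_comp_iff:
  assumes f: "unital_schwarz f" and g: "unital_schwarz g" and "faithful f"
  shows "a \<in> mult_domain (f \<circ> g) \<longleftrightarrow> a \<in> mult_domain g \<and> g a \<in> mult_domain f"
  using left_mult_domain_comp_iff[OF assms, of a] left_mult_domain_comp_iff[OF assms, of "cadj a"]
    mult_domain_iff_left_mult_domain[OF unital_schwarz_comp[OF f g], of a]
    mult_domain_iff_left_mult_domain[OF f, of "g a"] mult_domain_iff_left_mult_domain[OF g, of a]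
    unital_schwarz_cadj[OF g, of a]
  by auto

section \<open>Faithfulness of the powers of a primitive map\<close>

lemma cquad_0_right [simp]: "cquad M 0 = 0"
  by (simp add: cquad_def)

lemma cquad_scaleR: "cquad M (r *\<^sub>R v) = of_real (r^2) * cquad M v"
proof -
  have "(r *\<^sub>R v) $ i = of_real r * v $ i" for i
    by (simp only: vector_scaleR_component) (simp add: scaleR_conv_of_real)
  then show ?thesis
    by (simp add: cquad_def matrix_vector_mult_def sum_distrib_left algebra_simps power2_eq_square)
qed

lemma cquad_mat_1: "cquad (mat 1) v = of_real ((norm v)^2)"
proof -
  have "cquad (mat 1) v = (\<Sum>i\<in>UNIV. cnj (v$i) * v$i)"
    by (simp add: cquad_def)
  also have "\<dots> = (\<Sum>i\<in>UNIV. of_real ((cmod (v$i))^2))"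
    by (rule sum.cong[OF refl]) (metis complex_norm_square mult.commute)
  also have "\<dots> = of_real ((norm v)^2)"
    by (simp add: power2_norm_eq_inner inner_vec_def)
  finally show ?thesis .
qed

text \<open>The witness e is the minimum of the quadratic form of Q on the compact unit sphere.\<close>

lemma pos_def_ge_cscale_mat_1:
  fixes Q :: "complex^'n^'n"
  assumes "pos_def Q"
  shows "\<exists>e>0. loewner_le (cscale (of_real e) (mat 1)) Q"
proof -
  define g where "g v = Re (cquad Q v)" for v :: "complex^'n"
  have "continuous_on (sphere 0 1) g"
    unfolding g_def cquad_def matrix_vector_mult_def by (intro continuous_intros)
  moreover have "sphere (0 :: complex^'n) 1 \<noteq> {}" by simp
  ultimately obtain u where u: "u \<in> sphere 0 1" and u_min: "\<And>v. v \<in> sphere 0 1 \<Longrightarrow> g u \<le> g v"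
    using continuous_attains_inf[OF compact_sphere] by blast
  have Q_real: "cquad Q v = of_real (g v)" if "v \<noteq> 0" for v
    using assms that by (simp add: pos_def_def g_def less_complex_def complex_eq_iff)
  have "u \<noteq> 0" using u by auto
  then have "0 < g u"
    using assms by (simp add: pos_def_def g_def less_complex_def)
  moreover have "0 \<le> cquad (Q - cscale (of_real (g u)) (mat 1)) v" for v
  proof (cases "v = 0")
    case False
    define w where "w = (1 / norm v) *\<^sub>R v"
    have w: "w \<in> sphere 0 1" "norm w = 1" "w \<noteq> 0"
      using False by (auto simp: w_def)
    have "norm v *\<^sub>R w = v"
      using False by (simp add: w_def)
    then have scale: "cquad M v = of_real ((norm v)^2) * cquad M w" for M
      using cquad_scaleR[of M "norm v" w] by simp
    have "cquad (Q - cscale (of_real (g u)) (mat 1)) v = cquad Q v - of_real (g u) * cquad (mat 1) v"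
      by (simp add: cquad_eq_csesq csesq_diff csesq_cscale)
    also have "\<dots> = of_real ((norm v)^2 * (g w - g u))"
      by (simp add: scale cquad_mat_1 w(2) Q_real[OF w(3)] algebra_simps)
    finally show ?thesis
      using u_min[OF w(1)] by (simp add: less_eq_complex_def)
  qed simp
  ultimately show ?thesis
    unfolding loewner_le_def psd_def by blast
qed

text \<open>If phi ^^ k kills a nonzero psd X, it also kills the positive definite (phi ^^ N) X,
  which dominates a positive multiple of the identity; but phi ^^ k fixes the identity.\<close>

lemma faithful_funpow_if_primitive:
  fixes phi :: "complex^'n^'n \<Rightarrow> complex^'n^'n"
  assumes phi: "unital_schwarz phi" and "primitive phi"
  shows "faithful (phi ^^ k)"
  unfolding faithful_def
proof (intro allI impI)
  fix X assume X: "psd X \<and> (phi ^^ k) X = 0"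
  have phi_k: "unital_schwarz (phi ^^ k)" by (rule unital_schwarz_funpow[OF phi])
  note lin = unital_schwarz_clinear_map[OF phi_k]
  show "X = 0"
  proof (rule ccontr)
    assume "X \<noteq> 0"
    obtain N where "pos_def ((phi ^^ N) X)"
      using \<open>primitive phi\<close> X \<open>X \<noteq> 0\<close> by (auto simp: primitive_def)
    then obtain e where "e > 0" and e: "loewner_le (cscale (of_real e) (mat 1)) ((phi ^^ N) X)"
      using pos_def_ge_cscale_mat_1 by blast
    have "(phi ^^ k) ((phi ^^ N) X) = (phi ^^ (k + N)) X"
      by (simp add: funpow_add)
    also have "\<dots> = (phi ^^ (N + k)) X"
      by (simp add: add.commute)
    also have "\<dots> = (phi ^^ N) ((phi ^^ k) X)"
      by (simp add: funpow_add)
    finally have "(phi ^^ k) ((phi ^^ N) X) = 0"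
      using X clinear_map_0[OF unital_schwarz_clinear_map[OF unital_schwarz_funpow[OF phi]]] by simp
    then have "loewner_le (cscale (of_real e) (mat 1)) (0 :: complex^'n^'n)"
      using unital_schwarz_loewner_mono[OF phi_k e]
      by (simp add: clinear_map_cscale[OF lin] unital_schwarz_mat_1[OF phi_k])
    then have "0 \<le> cquad (- cscale (of_real e) (mat 1 :: complex^'n^'n)) (axis undefined 1)"
      by (simp add: loewner_le_def psd_def)
    then show False
      using \<open>e > 0\<close> by (simp add: cquad_axis cscale_def mat_def less_eq_complex_def)
  qed
qed

lemma subspace_decseq_stabilizes:
  fixes M :: "nat \<Rightarrow> 'a::euclidean_space set"
  assumes subspace: "\<And>k. subspace (M k)" and "decseq M"
  shows "\<exists>k. M k = M (Suc k)"
proof (rule ccontr)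
  assume "\<nexists>k. M k = M (Suc k)"
  then have dim_less: "dim (M (Suc k)) < dim (M k)" for k
    using subspace_dim_equal[OF subspace subspace] dim_subset \<open>decseq M\<close>
    by (metis decseq_Suc_iff le_neq_implies_less)
  have "dim (M k) + k \<le> dim (M 0)" for k
  proof (induction k)
    case (Suc k)
    then show ?case using dim_less[of k] by simp
  qed simp
  then have "k \<le> DIM('a)" for k
    by (metis dim_subset_UNIV add_leD2 le_trans)
  then show False
    using Suc_n_not_le_n by blast
qed

lemma decseq_Inter_eq_if_stable:
  fixes M :: "nat \<Rightarrow> 'a set"
  assumes "decseq M" and step: "\<And>k. M k = M (Suc k) \<Longrightarrow> M (Suc k) = M (Suc (Suc k))"
    and "M n = M (Suc n)"
  shows "(\<Inter>k. M k) = M n"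
proof -
  have "M (n + d) = M (Suc (n + d))" for d
    by (induction d) (use \<open>M n = M (Suc n)\<close> step in auto)
  then have stable: "M (n + d) = M n" for d
    by (induction d) auto
  have "M n \<subseteq> M k" for k
  proof (cases "k \<le> n")
    case True
    then show ?thesis using \<open>decseq M\<close> by (simp add: decseq_def)
  next
    case False
    then have "k = n + (k - n)" by simp
    then show ?thesis using stable by (metis order_refl)
  qed
  then show ?thesis by blast
qed

lemma decseq_stable_iff_Least_le:
  fixes M :: "nat \<Rightarrow> 'a set"
  assumes dec: "decseq M" and step: "\<And>k. M k = M (Suc k) \<Longrightarrow> M (Suc k) = M (Suc (Suc k))"
    and "\<exists>k. M k = M (Suc k)"
  shows "M n = M (Suc n) \<longleftrightarrow> (LEAST k. (\<Inter>j. M j) = M k) \<le> n"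
proof
  assume "M n = M (Suc n)"
  then have "(\<Inter>j. M j) = M n" using decseq_Inter_eq_if_stable[of M n] dec step by blast
  then show "(LEAST k. (\<Inter>j. M j) = M k) \<le> n" by (rule Least_le)
next
  let ?K = "LEAST k. (\<Inter>j. M j) = M k"
  assume "?K \<le> n"
  obtain k where "M k = M (Suc k)" using \<open>\<exists>k. M k = M (Suc k)\<close> ..
  then have "(\<Inter>j. M j) = M k" using decseq_Inter_eq_if_stable[of M k] dec step by blast
  then have "(\<Inter>j. M j) = M ?K" by (rule LeastI)
  moreover have "M n \<subseteq> M ?K" "M (Suc n) \<subseteq> M n"
    using dec \<open>?K \<le> n\<close> by (simp_all add: decseq_def)
  ultimately show "M n = M (Suc n)" by blast
qed

theorem lemma3p7:
  fixes phi :: "complex^'n^'n \<Rightarrow> complex^'n^'n" and n :: nat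
  assumes "unital_schwarz phi" and "primitive phi"
  shows "mult_domain (phi ^^ n) = mult_domain (phi ^^ Suc n) \<longleftrightarrow> kappa phi \<le> n"
proof -
  note phi = assms(1) and phi_k = unital_schwarz_funpow[OF assms(1)]
  define M where "M k = mult_domain (phi ^^ k)" for k
  have faithful: "faithful (phi ^^ k)" for k
    by (rule faithful_funpow_if_primitive[OF assms])
  have "faithful phi"
    using faithful[of 1] by simp
  then have M_Suc_left: "a \<in> M (Suc k) \<longleftrightarrow> a \<in> M k \<and> (phi ^^ k) a \<in> mult_domain phi" for a k
    using mult_domain_comp_iff[OF phi phi_k] by (simp add: M_def)
  have M_Suc_right: "a \<in> M (Suc k) \<longleftrightarrow> a \<in> mult_domain phi \<and> phi a \<in> M k" for a k
    unfolding M_def funpow_Suc_right by (rule mult_domain_comp_iff[OF phi_k phi faithful])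
  have "decseq M"
    using M_Suc_left by (auto simp: decseq_Suc_iff)
  moreover have "M (Suc k) = M (Suc (Suc k))" if "M k = M (Suc k)" for k
    using M_Suc_right[of _ k] M_Suc_right[of _ "Suc k"] that by blast
  moreover have "subspace (M k)" for k
    unfolding M_def by (rule subspace_mult_domain[OF phi_k])
  then have "\<exists>k. M k = M (Suc k)"
    using \<open>decseq M\<close> by (rule subspace_decseq_stabilizes)
  ultimately have "M n = M (Suc n) \<longleftrightarrow> (LEAST k. (\<Inter>j. M j) = M k) \<le> n"
    using decseq_stable_iff_Least_le[of M n] by blast
  then show ?thesis by (simp add: M_def kappa_def)
qed

end
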